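(* Over profiles whose ballots are strict weak orders (ties allowed), let $F$ be a VSCC satisfying Anonymity, Neutrality, Neutral Indifference, Monotonicity for two-candidate profiles (in particular, if it satisfies Monotonicity), Neutral Reversal, and Coherent IIA. Then $SC(\mathbf P)\subseteq F(\mathbf P)$ for every profile $\mathbf P$.
   Context: Profiles: $\mathbf P:V\to\mathcal W(X)$, $V$ nonempty finite set of voters, $X=X(\mathbf P)$ nonempty finite set of candidates (from fixed infinite sets), $\mathcal W(X)$ the strict weak orders on $X$ (irreflexive, transitive, negatively transitive; the empty relation is allowed). "Ranks $x$ above $y$" means strictly. $\mathbf P_{|Y}$ restricts ballots to $Y$. $\mathrm{Margin}_{\mathbf P}(x,y)$ = #voters with $x$ strictly above $y$ minus #voters with $y$ strictly above $x$. $\mathcal M(\mathbf P)$: edges $x\to y$ weighted $\mathrm{Margin}_{\mathbf P}(x,y)$ when positive. Majority paths and strength (minimum consecutive margin) as usual. $(x,y)\in sc(\mathbf P)$ iff $\mathrm{Margin}_{\mathbf P}(x,y)>0$ exceeds the strength of every majority path from $y$ to $x$; $SC(\mathbf P)$ = set of $y$ with no $x$ such that $(x,y)\in sc(\mathbf P)$. A VSCC is $F$ with $\varnothing\ne F(\mathbf P)\subseteq X(\mathbf P)$. Moving up one place: for strict weak order $\succ$ on finite $X$ and $x$ not greatest, let $x'\ne x$ be $\succ$-minimal with $x\not\succ x'$; $\succ'$ results from moving $x$ up one place if it agrees with $\succ$ off $x$, and: if $x$ is tied with $x'$ in $\succ$ then in $\succ'$ $x$ is tied with nothing, $x\succ'x'$,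 and $y\succ x$ implies $y\succ'x$; if $x$ is tied with nothing in $\succ$, then $x$ is tied with $x'$ in $\succ'$. Axioms: Anonymity (permuting which voter has which ballot, same voter set, leaves $F$ unchanged); Neutrality (if a bijection $\pi$ of candidates transforms $\mathbf P$ into $\mathbf P'$ ballot-wise, same voters and candidates, then $x\in F(\mathbf P)\iff\pi(x)\in F(\mathbf P')$); Neutral Indifference (adding a voter with empty ballot leaves $F$ unchanged); Monotonicity (resp. for two-candidate profiles): moving $x$ up one place in one ballot of a (resp. two-candidate) profile preserves $x\in F(\cdot)$; Neutral Reversal (adding two voters with converse ballots leaves $F$ unchanged); Coherent IIA: with $\mathbf P\rightsquigarrow_{x,y}\mathbf P'$ meaning $\mathbf P_{|\{x,y\}}=\mathbf P'_{|\{x,y\}}$ and $\mathcal M(\mathbf P')$ obtainable from $\mathcal M(\mathbf P)$ by deleting zero or more candidates other than $x,y$ and deleting or reducing weights of zero or more edges not connecting $x,y$: if $y\notin F(\mathbf P)$, some $x\in X(\mathbf P)$ has $y\notin F(\mathbf P')$ for every $\mathbf P'$ with $\mathbf P\rightsquigarrow_{x,y}\mathbf P'$. *)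

theory Defs
  imports Main
begin

text \<open>A profile is a triple (V, X, P): a voter set V, a candidate set X and a
ballot function P assigning to each voter a strict relation on candidates
(P i is "strictly above").  Ballots of non-voters are fixed to be empty so that
a profile is determined by its restriction to V.\<close>

type_synonym ('v,'c) prof = "'v set \<times> 'c set \<times> ('v \<Rightarrow> ('c \<times> 'c) set)"

definition voters :: "('v,'c) prof \<Rightarrow> 'v set" where
  "voters Pr = fst Pr"

definition cands :: "('v,'c) prof \<Rightarrow> 'c set" where
  "cands Pr = fst (snd Pr)"

definition ballot :: "('v,'c) prof \<Rightarrow> 'v \<Rightarrow> ('c \<times> 'c) set" where
  "ballot Pr = snd (snd Pr)"

definition strict_weak_order :: "'c set \<Rightarrow> ('c \<times> 'c) set \<Rightarrow> bool" where
  "strict_weak_order X R \<longleftrightarrow>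
     R \<subseteq> X \<times> X \<and>
     (\<forall>a\<in>X. (a,a) \<notin> R) \<and>
     (\<forall>a\<in>X. \<forall>b\<in>X. \<forall>c\<in>X. (a,b) \<in> R \<and> (b,c) \<in> R \<longrightarrow> (a,c) \<in> R) \<and>
     (\<forall>a\<in>X. \<forall>b\<in>X. \<forall>c\<in>X. (a,b) \<in> R \<longrightarrow> (a,c) \<in> R \<or> (c,b) \<in> R)"

definition profile :: "('v,'c) prof \<Rightarrow> bool" where
  "profile Pr \<longleftrightarrow>
     finite (voters Pr) \<and> voters Pr \<noteq> {} \<and>
     finite (cands Pr) \<and> cands Pr \<noteq> {} \<and>
     (\<forall>i\<in>voters Pr. strict_weak_order (cands Pr) (ballot Pr i)) \<and>
     (\<forall>i. i \<notin> voters Pr \<longrightarrow> ballot Pr i = {})"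

definition margin :: "('v,'c) prof \<Rightarrow> 'c \<Rightarrow> 'c \<Rightarrow> int" where
  "margin Pr x y =
     int (card {i \<in> voters Pr. (x,y) \<in> ballot Pr i})
     - int (card {i \<in> voters Pr. (y,x) \<in> ballot Pr i})"

definition majority_path :: "('v,'c) prof \<Rightarrow> 'c list \<Rightarrow> 'c \<Rightarrow> 'c \<Rightarrow> bool" where
  "majority_path Pr p a b \<longleftrightarrow>
     length p \<ge> 2 \<and> distinct p \<and> set p \<subseteq> cands Pr \<and>
     hd p = a \<and> last p = b \<and>
     (\<forall>k < length p - 1. margin Pr (p ! k) (p ! Suc k) > 0)"

definition path_strength :: "('v,'c) prof \<Rightarrow> 'c list \<Rightarrow> int" where
  "path_strength Pr p = Min (set (map (\<lambda>(a,b). margin Pr a b) (zip p (tl p))))"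

definition sc :: "('v,'c) prof \<Rightarrow> ('c \<times> 'c) set" where
  "sc Pr = {(x,y). x \<in> cands Pr \<and> y \<in> cands Pr \<and> margin Pr x y > 0 \<and>
              (\<forall>p. majority_path Pr p y x \<longrightarrow> margin Pr x y > path_strength Pr p)}"

definition SC :: "('v,'c) prof \<Rightarrow> 'c set" where
  "SC Pr = {y \<in> cands Pr. \<not> (\<exists>x. (x,y) \<in> sc Pr)}"

definition VSCC :: "(('v,'c) prof \<Rightarrow> 'c set) \<Rightarrow> bool" where
  "VSCC F \<longleftrightarrow> (\<forall>Pr. profile Pr \<longrightarrow> F Pr \<noteq> {} \<and> F Pr \<subseteq> cands Pr)"

definition anonymity :: "(('v,'c) prof \<Rightarrow> 'c set) \<Rightarrow> bool" where
  "anonymity F \<longleftrightarrow>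
     (\<forall>Pr Pr' \<pi>. profile Pr \<and> profile Pr' \<and> voters Pr' = voters Pr \<and> cands Pr' = cands Pr \<and>
        bij_betw \<pi> (voters Pr) (voters Pr) \<and>
        (\<forall>i\<in>voters Pr. ballot Pr' i = ballot Pr (\<pi> i))
        \<longrightarrow> F Pr' = F Pr)"

definition neutrality :: "(('v,'c) prof \<Rightarrow> 'c set) \<Rightarrow> bool" where
  "neutrality F \<longleftrightarrow>
     (\<forall>Pr Pr' \<pi>. profile Pr \<and> profile Pr' \<and> voters Pr' = voters Pr \<and> cands Pr' = cands Pr \<and>
        bij_betw \<pi> (cands Pr) (cands Pr) \<and>
        (\<forall>i\<in>voters Pr. ballot Pr' i = {(\<pi> a, \<pi> b) | a b. (a,b) \<in> ballot Pr i})
        \<longrightarrow> (\<forall>x\<in>cands Pr. x \<in> F Pr \<longleftrightarrow> \<pi> x \<in> F Pr'))"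

definition neutral_indifference :: "(('v,'c) prof \<Rightarrow> 'c set) \<Rightarrow> bool" where
  "neutral_indifference F \<longleftrightarrow>
     (\<forall>Pr v. profile Pr \<and> v \<notin> voters Pr \<longrightarrow>
        F (insert v (voters Pr), cands Pr, ballot Pr) = F Pr)"

definition tied :: "('c \<times> 'c) set \<Rightarrow> 'c \<Rightarrow> 'c \<Rightarrow> bool" where
  "tied R a b \<longleftrightarrow> (a,b) \<notin> R \<and> (b,a) \<notin> R"

definition moved_up_one :: "'c set \<Rightarrow> ('c \<times> 'c) set \<Rightarrow> 'c \<Rightarrow> ('c \<times> 'c) set \<Rightarrow> bool" where
  "moved_up_one X R x R' \<longleftrightarrow>
     x \<in> X \<and> strict_weak_order X R' \<and>
     \<comment> \<open>x is not greatest\<close>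
     (\<exists>z\<in>X. z \<noteq> x \<and> (x,z) \<notin> R) \<and>
     \<comment> \<open>agreement off x\<close>
     (\<forall>a\<in>X. \<forall>b\<in>X. a \<noteq> x \<and> b \<noteq> x \<longrightarrow> ((a,b) \<in> R' \<longleftrightarrow> (a,b) \<in> R)) \<and>
     (\<forall>x'. (x' \<in> X \<and> x' \<noteq> x \<and> (x,x') \<notin> R \<and>
             \<not> (\<exists>z\<in>X. z \<noteq> x \<and> (x,z) \<notin> R \<and> (x',z) \<in> R)) \<longrightarrow>
        ((tied R x x' \<longrightarrow>
            (\<forall>z\<in>X. z \<noteq> x \<longrightarrow> \<not> tied R' x z) \<and> (x,x') \<in> R' \<and>
            (\<forall>y\<in>X. (y,x) \<in> R \<longrightarrow> (y,x) \<in> R')) \<and>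
         ((\<forall>z\<in>X. z \<noteq> x \<longrightarrow> \<not> tied R x z) \<longrightarrow> tied R' x x')))"

definition monotonicity_two :: "(('v,'c) prof \<Rightarrow> 'c set) \<Rightarrow> bool" where
  "monotonicity_two F \<longleftrightarrow>
     (\<forall>Pr i x R'. profile Pr \<and> card (cands Pr) = 2 \<and> i \<in> voters Pr \<and>
        moved_up_one (cands Pr) (ballot Pr i) x R' \<and> x \<in> F Pr
        \<longrightarrow> x \<in> F (voters Pr, cands Pr, (ballot Pr)(i := R')))"

definition neutral_reversal :: "(('v,'c) prof \<Rightarrow> 'c set) \<Rightarrow> bool" where
  "neutral_reversal F \<longleftrightarrow>
     (\<forall>Pr v1 v2 R. profile Pr \<and> v1 \<notin> voters Pr \<and> v2 \<notin> voters Pr \<and> v1 \<noteq> v2 \<and>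
        strict_weak_order (cands Pr) R \<longrightarrow>
        F (voters Pr \<union> {v1, v2}, cands Pr, (ballot Pr)(v1 := R, v2 := R\<inverse>)) = F Pr)"

definition restrict_prof :: "('v,'c) prof \<Rightarrow> 'c set \<Rightarrow> ('v,'c) prof" where
  "restrict_prof Pr Y = (voters Pr, Y, \<lambda>i. ballot Pr i \<inter> (Y \<times> Y))"

text \<open>P \<leadsto>_{x,y} P': equal restrictions to {x,y}; the majority graph of P' arises
from that of P by deleting candidates other than x,y and deleting/reducing
weights of edges not connecting x and y.\<close>
definition coh_rel :: "('v,'c) prof \<Rightarrow> 'c \<Rightarrow> 'c \<Rightarrow> ('v,'c) prof \<Rightarrow> bool" where
  "coh_rel Pr x y Pr' \<longleftrightarrow>
     restrict_prof Pr {x,y} = restrict_prof Pr' {x,y} \<and>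
     {x,y} \<subseteq> cands Pr' \<and> cands Pr' \<subseteq> cands Pr \<and>
     (\<forall>a\<in>cands Pr'. \<forall>b\<in>cands Pr'.
        (margin Pr' a b > 0 \<longrightarrow> margin Pr a b > 0 \<and> margin Pr' a b \<le> margin Pr a b) \<and>
        ({a,b} = {x,y} \<longrightarrow> margin Pr' a b = margin Pr a b))"

definition coherent_IIA :: "(('v,'c) prof \<Rightarrow> 'c set) \<Rightarrow> bool" where
  "coherent_IIA F \<longleftrightarrow>
     (\<forall>Pr y. profile Pr \<and> y \<in> cands Pr \<and> y \<notin> F Pr \<longrightarrow>
        (\<exists>x\<in>cands Pr. \<forall>Pr'. profile Pr' \<and> coh_rel Pr x y Pr' \<longrightarrow> y \<notin> F Pr'))"

end

theory Submission
  imports Defs "HOL-Library.Disjoint_Sets"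
begin

text \<open>
  Suppose \<open>y \<in> SC P\<close> but \<open>y \<notin> F P\<close>. Coherent IIA yields an \<open>x\<close> such that \<open>y\<close> loses in every
  \<open>P'\<close> with \<open>P \<leadsto>\<^sub>x\<^sub>,\<^sub>y P'\<close>; we construct such a \<open>P'\<close> in which \<open>F\<close> chooses \<open>y\<close>.
  Neutral Reversal and Neutral Indifference first let us replace \<open>P\<close> by a padded profile with
  the same margins and the same value of \<open>F\<close>. As \<open>x\<close> does not beat \<open>y\<close> in \<open>sc\<close>, either
  \<open>Margin(x, y) \<le> 0\<close>, and the restriction of \<open>P\<close> to \<open>{x, y}\<close> chooses \<open>y\<close> (in a tie Anonymity
  and Neutrality force \<open>F\<close> to choose both candidates, and Monotonicity passes from a tie to a
  majority for \<open>y\<close>); or there is a majority path \<open>y = a\<^sub>0 \<rightarrow> \<dots> \<rightarrow> a\<^sub>n\<^sub>-\<^sub>1 = x\<close>, \<open>n \<ge> 3\<close>, all of whose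
  edges are at least \<open>m = Margin(x, y) > 0\<close>. Then the voters are redistributed over the
  \<open>a\<^sub>i\<close> so that the restriction to \<open>{x, y}\<close> is unchanged and the majority graph becomes the
  \<open>n\<close>-cycle with all weights \<open>m\<close>. This profile is symmetric under rotating the cycle, so \<open>F\<close>
  chooses every \<open>a\<^sub>i\<close>, in particular \<open>y\<close>.
\<close>

section \<open>Profiles and margins\<close>

lemma strict_weak_order_subset: "strict_weak_order X R \<Longrightarrow> R \<subseteq> X \<times> X"
  unfolding strict_weak_order_def by blast

lemma strict_weak_order_irrefl: "strict_weak_order X R \<Longrightarrow> (a, a) \<notin> R"
  unfolding strict_weak_order_def by blast

lemma strict_weak_order_asym: "strict_weak_order X R \<Longrightarrow> (a, b) \<in> R \<Longrightarrow> (b, a) \<notin> R"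
  unfolding strict_weak_order_def by blast

lemma strict_weak_order_empty [simp]: "strict_weak_order X {}"
  unfolding strict_weak_order_def by blast

lemma strict_weak_order_converse: "strict_weak_order X R \<Longrightarrow> strict_weak_order X (R\<inverse>)"
  unfolding strict_weak_order_def by blast

lemma strict_weak_order_restrict:
  "strict_weak_order X R \<Longrightarrow> Y \<subseteq> X \<Longrightarrow> strict_weak_order Y (R \<inter> Y \<times> Y)"
  unfolding strict_weak_order_def by blast

definition score_order :: "'c set \<Rightarrow> ('c \<Rightarrow> nat) \<Rightarrow> ('c \<times> 'c) set" where
  "score_order X s = {(a, b). a \<in> X \<and> b \<in> X \<and> s b < s a}"

lemma strict_weak_order_score_order: "strict_weak_order X (score_order X s)"
  unfolding strict_weak_order_def score_order_def by auto

lemma prof_simps [simp]: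
  "voters (V, X, B) = V" "cands (V, X, B) = X" "ballot (V, X, B) = B"
  unfolding voters_def cands_def ballot_def by simp_all

lemma prof_eq: "Pr = (voters Pr, cands Pr, ballot Pr)"
  unfolding voters_def cands_def ballot_def by simp

lemma profile_finite_voters: "profile Pr \<Longrightarrow> finite (voters Pr)"
  and profile_finite_cands: "profile Pr \<Longrightarrow> finite (cands Pr)"
  and profile_ballot: "profile Pr \<Longrightarrow> i \<in> voters Pr \<Longrightarrow> strict_weak_order (cands Pr) (ballot Pr i)"
  and profile_ballot_outside: "profile Pr \<Longrightarrow> i \<notin> voters Pr \<Longrightarrow> ballot Pr i = {}"
  unfolding profile_def by auto

lemma restrict_prof_simps [simp]:
  "voters (restrict_prof Pr Y) = voters Pr"
  "cands (restrict_prof Pr Y) = Y"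
  "ballot (restrict_prof Pr Y) i = ballot Pr i \<inter> Y \<times> Y"
  unfolding restrict_prof_def by simp_all

lemma profile_restrict_prof:
  "profile Pr \<Longrightarrow> Y \<subseteq> cands Pr \<Longrightarrow> Y \<noteq> {} \<Longrightarrow> profile (restrict_prof Pr Y)"
  unfolding profile_def by (auto intro: finite_subset strict_weak_order_restrict)

definition supporters :: "('v,'c) prof \<Rightarrow> 'c \<Rightarrow> 'c \<Rightarrow> 'v set" where
  "supporters Pr a b = {i \<in> voters Pr. (a, b) \<in> ballot Pr i}"

lemma margin_supporters:
  "margin Pr a b = int (card (supporters Pr a b)) - int (card (supporters Pr b a))"
  unfolding margin_def supporters_def ..

lemma supporters_disjoint: "profile Pr \<Longrightarrow> supporters Pr a b \<inter> supporters Pr b a = {}"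
  unfolding supporters_def by (auto dest: profile_ballot strict_weak_order_asym)

lemma margin_swap: "margin Pr a b = - margin Pr b a"
  unfolding margin_def by simp

lemma margin_restrict_prof: "a \<in> Y \<Longrightarrow> b \<in> Y \<Longrightarrow> margin (restrict_prof Pr Y) a b = margin Pr a b"
  unfolding margin_def by simp

lemma margin_eq_if_restrict_prof_eq:
  assumes "restrict_prof Pr {a, b} = restrict_prof Pr' {a, b}"
  shows "margin Pr a b = margin Pr' a b"
  by (metis assms insertCI margin_restrict_prof)

lemma restrict_prof_idem [simp]: "restrict_prof (restrict_prof Pr Y) Y = restrict_prof Pr Y"
  unfolding restrict_prof_def by auto

lemma coh_rel_restrict_prof:
  "x \<in> cands Pr \<Longrightarrow> y \<in> cands Pr \<Longrightarrow> coh_rel Pr x y (restrict_prof Pr {x, y})"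
  unfolding coh_rel_def by (auto simp: margin_restrict_prof)

lemma sc_cong: "cands Pr = cands Pr' \<Longrightarrow> margin Pr = margin Pr' \<Longrightarrow> sc Pr = sc Pr'"
  unfolding sc_def majority_path_def path_strength_def by simp

lemma VSCCD: "VSCC F \<Longrightarrow> profile Pr \<Longrightarrow> F Pr \<noteq> {} \<and> F Pr \<subseteq> cands Pr"
  unfolding VSCC_def by blast

lemma path_strength_le:
  assumes "k < length p - 1"
  shows "path_strength Pr p \<le> margin Pr (p ! k) (p ! Suc k)"
proof -
  have "(p ! k, p ! Suc k) \<in> set (zip p (tl p))"
    using assms by (auto simp: in_set_conv_nth nth_tl intro!: exI[of _ k])
  then show ?thesis
    unfolding path_strength_def by (intro Min_le) force+
qed

lemma restrict_pair_eqI: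
  assumes "strict_weak_order X R" "strict_weak_order X' R'"
    and "(x, y) \<in> R \<longleftrightarrow> (x, y) \<in> R'" "(y, x) \<in> R \<longleftrightarrow> (y, x) \<in> R'"
  shows "R \<inter> {x, y} \<times> {x, y} = R' \<inter> {x, y} \<times> {x, y}"
  using assms strict_weak_order_irrefl[OF assms(1)] strict_weak_order_irrefl[OF assms(2)] by blast

section \<open>Anonymity and neutrality\<close>

lemma ex_bij_betw_fiber_card_eq:
  assumes "finite V" and "\<And>t. card {i \<in> V. f i = t} = card {i \<in> V. g i = t}"
  shows "\<exists>\<sigma>. bij_betw \<sigma> V V \<and> (\<forall>i \<in> V. g (\<sigma> i) = f i)"
proof -
  have "\<exists>h. bij_betw h {i \<in> V. f i = t} {i \<in> V. g i = t}" for t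
    using assms by (intro finite_same_card_bij) auto
  then obtain h where h: "\<And>t. bij_betw (h t) {i \<in> V. f i = t} {i \<in> V. g i = t}"
    by metis
  define \<sigma> where "\<sigma> i = h (f i) i" for i
  have "bij_betw \<sigma> {i \<in> V. f i = t} {i \<in> V. g i = t}" for t
    by (rule bij_betw_cong[THEN iffD1, OF _ h[of t]]) (simp add: \<sigma>_def)
  then have "bij_betw \<sigma> (\<Union>t. {i \<in> V. f i = t}) (\<Union>t. {i \<in> V. g i = t})"
    by (intro bij_betw_UNION_disjoint) (auto simp: disjoint_family_on_def)
  moreover have "(\<Union>t. {i \<in> V. f i = t}) = V" "(\<Union>t. {i \<in> V. g i = t}) = V"
    by auto
  moreover have "g (\<sigma> i) = f i" if "i \<in> V" for i
    using bij_betw_apply[OF h[of "f i"]] that by (simp add: \<sigma>_def)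
  ultimately show ?thesis by auto
qed

lemma image_pair_eq: "{(f a, f b) | a b. (a, b) \<in> R} = map_prod f f ` R"
  by force

lemma anonymity_neutrality_invariant:
  assumes "anonymity F" and "neutrality F" and "profile Pr"
    and "bij_betw \<pi> (cands Pr) (cands Pr)" and "bij_betw \<sigma> (voters Pr) (voters Pr)"
    and "\<And>i. i \<in> voters Pr \<Longrightarrow> ballot Pr (\<sigma> i) = map_prod \<pi> \<pi> ` ballot Pr i"
    and "c \<in> cands Pr"
  shows "\<pi> c \<in> F Pr \<longleftrightarrow> c \<in> F Pr"
proof -
  define Pr' where "Pr' = (voters Pr, cands Pr, \<lambda>i. if i \<in> voters Pr then ballot Pr (\<sigma> i) else {})"
  have "profile Pr'"
    using assms(3) bij_betw_apply[OF assms(5)] unfolding Pr'_def profile_def by auto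
  have "F Pr' = F Pr"
    using assms(1)[unfolded anonymity_def, rule_format, of Pr Pr' \<sigma>] \<open>profile Pr'\<close> assms(3,5)
    by (simp add: Pr'_def)
  moreover have "c \<in> F Pr \<longleftrightarrow> \<pi> c \<in> F Pr'"
    by (rule assms(2)[unfolded neutrality_def, rule_format, of Pr Pr' \<pi>])
      (use \<open>profile Pr'\<close> assms(3,4,6,7) in \<open>auto simp: Pr'_def image_pair_eq\<close>)
  ultimately show ?thesis by simp
qed

section \<open>Two candidates\<close>

lemma ballot_two_candidates:
  assumes "profile Q" "cands Q = {x, y}" "i \<in> voters Q"
  shows "ballot Q i \<in> {{}, {(x, y)}, {(y, x)}}"
proof -
  have R: "strict_weak_order {x, y} (ballot Q i)"
    using assms profile_ballot by metis
  then have "ballot Q i \<subseteq> {(x, y), (y, x)}"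
    using strict_weak_order_subset[OF R] strict_weak_order_irrefl[OF R] by blast
  then show ?thesis
    using strict_weak_order_asym[OF R] by blast
qed

definition transposition :: "'c \<Rightarrow> 'c \<Rightarrow> 'c \<Rightarrow> 'c" where
  "transposition x y c = (if c = x then y else if c = y then x else c)"

lemma transposition_image_image:
  "map_prod (transposition x y) (transposition x y) ` map_prod (transposition x y) (transposition x y) ` R = R"
proof -
  have "map_prod (transposition x y) (transposition x y) \<circ> map_prod (transposition x y) (transposition x y) = id"
    by (auto simp: transposition_def fun_eq_iff)
  then show ?thesis
    by (simp add: image_comp)
qed

lemma card_ballot_transposition_two_candidates:
  assumes Q: "profile Q" "cands Q = {x, y}" "x \<noteq> y" "margin Q x y = 0"
  shows "card {i \<in> voters Q. ballot Q i = map_prod (transposition x y) (transposition x y) ` R}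
    = card {i \<in> voters Q. ballot Q i = R}"
proof -
  let ?V = "voters Q" and ?swap = "\<lambda>R. map_prod (transposition x y) (transposition x y) ` R"
  have swap_two: "?swap {} = {}" "?swap {(x, y)} = {(y, x)}" "?swap {(y, x)} = {(x, y)}"
    by (auto simp: transposition_def)
  have ballots: "ballot Q i \<in> {{}, {(x, y)}, {(y, x)}}" if "i \<in> ?V" for i
    using ballot_two_candidates[OF Q(1,2) that] .
  have "supporters Q a b = {i \<in> ?V. ballot Q i = {(a, b)}}" if "{a, b} = {x, y}" for a b
    using ballots that \<open>x \<noteq> y\<close> unfolding supporters_def by (auto simp: doubleton_eq_iff)
  then have tie: "card {i \<in> ?V. ballot Q i = {(x, y)}} = card {i \<in> ?V. ballot Q i = {(y, x)}}"
    using \<open>margin Q x y = 0\<close> by (simp add: margin_supporters insert_commute)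
  have "R \<in> {{}, {(x, y)}, {(y, x)}}" if "?swap R \<in> {{}, {(x, y)}, {(y, x)}}"
  proof -
    from that have "?swap (?swap R) \<in> ?swap ` {{}, {(x, y)}, {(y, x)}}"
      by blast
    also have "?swap ` {{}, {(x, y)}, {(y, x)}} = {{}, {(y, x)}, {(x, y)}}"
      by (simp add: transposition_def)
    finally show ?thesis
      unfolding transposition_image_image by blast
  qed
  then consider "R \<in> {{}, {(x, y)}, {(y, x)}}"
    | "R \<notin> {{}, {(x, y)}, {(y, x)}}" "?swap R \<notin> {{}, {(x, y)}, {(y, x)}}"
    by blast
  then show ?thesis
  proof cases
    case 1
    then show ?thesis
      using tie swap_two by auto
  next
    case 2
    then have no_voters: "{i \<in> ?V. ballot Q i = ?swap R} = {}" "{i \<in> ?V. ballot Q i = R} = {}"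
      using ballots by blast+
    show ?thesis
      by (simp only: no_voters)
  qed
qed

lemma two_candidate_tie_in_F:
  assumes "VSCC F" "anonymity F" "neutrality F"
    and Q: "profile Q" "cands Q = {x, y}" "x \<noteq> y" "margin Q x y = 0"
  shows "y \<in> F Q"
proof -
  let ?V = "voters Q" and ?\<pi> = "transposition x y"
  have "{i \<in> ?V. map_prod ?\<pi> ?\<pi> ` ballot Q i = R} = {i \<in> ?V. ballot Q i = map_prod ?\<pi> ?\<pi> ` R}" for R
    using transposition_image_image by metis
  then obtain \<sigma> where "bij_betw \<sigma> ?V ?V" "\<And>i. i \<in> ?V \<Longrightarrow> ballot Q (\<sigma> i) = map_prod ?\<pi> ?\<pi> ` ballot Q i"
    using ex_bij_betw_fiber_card_eq[OF profile_finite_voters[OF Q(1)], of "\<lambda>i. map_prod ?\<pi> ?\<pi> ` ballot Q i" "ballot Q"]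
      card_ballot_transposition_two_candidates[OF Q] by auto
  moreover have "bij_betw ?\<pi> (cands Q) (cands Q)"
    unfolding Q(2) bij_betw_def inj_on_def transposition_def by auto
  ultimately have "y \<in> F Q \<longleftrightarrow> x \<in> F Q"
    using anonymity_neutrality_invariant[OF assms(2,3) Q(1), of ?\<pi> \<sigma> x] Q(2)
    by (simp add: transposition_def)
  moreover have "F Q \<noteq> {}" "F Q \<subseteq> {x, y}"
    using VSCCD[OF \<open>VSCC F\<close> Q(1)] Q(2) by auto
  ultimately show ?thesis
    by blast
qed

lemma moved_up_one_from_tie: "x \<noteq> y \<Longrightarrow> moved_up_one {x, y} {} y {(y, x)}"
  unfolding moved_up_one_def strict_weak_order_def tied_def by auto

text \<open>Blank out just enough supporters of \<open>y\<close> to create a tie, then restore them one at a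
  time by Monotonicity.\<close>

lemma two_candidate_majority_in_F:
  assumes "VSCC F" "anonymity F" "neutrality F" "monotonicity_two F"
    and Q: "profile Q" "cands Q = {x, y}" "x \<noteq> y" "margin Q x y \<le> 0"
  shows "y \<in> F Q"
proof -
  define blank where "blank T = (voters Q, {x, y}, \<lambda>i. if i \<in> T then {} else ballot Q i)" for T
  have blank_profile: "profile (blank T)" for T
    using Q(1,2) unfolding profile_def blank_def by auto
  have "card (supporters Q x y) \<le> card (supporters Q y x)"
    using Q(4) by (simp add: margin_supporters)
  then obtain S where S: "S \<subseteq> supporters Q y x"
    "card S = card (supporters Q y x) - card (supporters Q x y)"
    by (meson diff_le_self obtain_subset_with_card_n)
  have finite_S: "finite S"
    using S(1) profile_finite_voters[OF Q(1)] unfolding supporters_def by (auto intro: finite_subset)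
  have "y \<in> F (blank (S - S'))" if "S' \<subseteq> S" for S'
    using finite_subset[OF that finite_S] that
  proof (induction S' rule: finite_subset_induct')
    case empty
    have "supporters (blank S) y x = supporters Q y x - S"
      "supporters (blank S) x y = supporters Q x y"
      using S(1) supporters_disjoint[OF Q(1), of y x] unfolding blank_def supporters_def by auto
    moreover have "card (supporters Q y x - S) = card (supporters Q x y)"
      using S finite_S \<open>card (supporters Q x y) \<le> card (supporters Q y x)\<close>
      by (simp add: card_Diff_subset)
    ultimately have "margin (blank S) x y = 0"
      by (simp add: margin_supporters)
    then show ?case
      using two_candidate_tie_in_F[OF assms(1-3) blank_profile] Q(3) by (simp add: blank_def)
  next
    case (insert a S')
    have "a \<in> voters Q" "(y, x) \<in> ballot Q a"
      using insert(2) S(1) unfolding supporters_def by auto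
    then have a: "a \<in> voters Q" "ballot Q a = {(y, x)}"
      using ballot_two_candidates[OF Q(1,2)] Q(3) by auto
    have "y \<in> F (voters (blank (S - S')), cands (blank (S - S')), (ballot (blank (S - S')))(a := {(y, x)}))"
      using assms(4)[unfolded monotonicity_two_def, rule_format, of "blank (S - S')" a y "{(y, x)}"]
        blank_profile[of "S - S'"] a insert moved_up_one_from_tie[OF Q(3)] Q(3)
      by (auto simp: blank_def)
    moreover have "(voters (blank (S - S')), cands (blank (S - S')), (ballot (blank (S - S')))(a := {(y, x)}))
        = blank (S - insert a S')"
      using a unfolding blank_def by (auto simp: fun_eq_iff)
    ultimately show ?case by simp
  qed
  moreover have "blank (S - S) = Q"
    using prof_eq[of Q] Q(2) unfolding blank_def by simp
  ultimately show ?thesis by blast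
qed

section \<open>Padded profiles\<close>

definition abstainers :: "('v,'c) prof \<Rightarrow> 'v set" where
  "abstainers Pr = {i \<in> voters Pr. ballot Pr i = {}}"

text \<open>Every margin is at most the number of voters on the losing side, and there are enough
  empty ballots: this is what is needed to redistribute the voters over a majority cycle without
  changing their ballots between the two end points of the cycle.\<close>

definition padded :: "('v,'c) prof \<Rightarrow> bool" where
  "padded Pr \<longleftrightarrow> (\<forall>a \<in> cands Pr. \<forall>b \<in> cands Pr. a \<noteq> b \<longrightarrow>
     card (supporters Pr a b) \<le> 2 * card (supporters Pr b a) \<and>
     card (cands Pr) * card (supporters Pr a b) \<le> card (abstainers Pr))"

lemma paddedD:
  assumes "padded Pr" "a \<in> cands Pr" "b \<in> cands Pr" "a \<noteq> b"
  shows "card (supporters Pr a b) \<le> 2 * card (supporters Pr b a)"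
    and "card (cands Pr) * card (supporters Pr a b) \<le> card (abstainers Pr)"
  using assms unfolding padded_def by blast+

lemma supporters_trivial:
  assumes "profile Pr" "a \<notin> cands Pr \<or> b \<notin> cands Pr \<or> a = b"
  shows "supporters Pr a b = {}"
  using assms unfolding supporters_def
  by (auto dest: profile_ballot strict_weak_order_subset strict_weak_order_irrefl)

lemma margin_eq_if_supporters_shift:
  assumes "profile Pr" "profile Pr'" "cands Pr' = cands Pr"
    and "\<And>a b. a \<in> cands Pr \<Longrightarrow> b \<in> cands Pr \<Longrightarrow> a \<noteq> b \<Longrightarrow>
           card (supporters Pr' a b) = card (supporters Pr a b) + k"
  shows "margin Pr' = margin Pr"
proof (intro ext)
  show "margin Pr' a b = margin Pr a b" for a b
    using assms supporters_trivial[OF assms(1), of a b] supporters_trivial[OF assms(1), of b a]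
      supporters_trivial[OF assms(2), of a b] supporters_trivial[OF assms(2), of b a]
    by (cases "a \<in> cands Pr \<and> b \<in> cands Pr \<and> a \<noteq> b") (auto simp: margin_supporters)
qed

lemma ex_linear_order:
  assumes "finite X"
  shows "\<exists>L. strict_weak_order X L \<and> (\<forall>a \<in> X. \<forall>b \<in> X. a \<noteq> b \<longrightarrow> (a, b) \<in> L \<or> (b, a) \<in> L)"
proof -
  obtain f :: "'a \<Rightarrow> nat" where "inj_on f X"
    using finite_imp_inj_to_nat_seg[OF assms] by blast
  have "(a, b) \<in> score_order X f \<or> (b, a) \<in> score_order X f" if "a \<in> X" "b \<in> X" "a \<noteq> b" for a b
  proof -
    have "f a \<noteq> f b"
      using inj_onD[OF \<open>inj_on f X\<close>] that by blast
    then show ?thesis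
      using that unfolding score_order_def by auto
  qed
  then show ?thesis
    using strict_weak_order_score_order by blast
qed

lemma neutral_indifference_Un_voters:
  assumes "neutral_indifference F" "profile Pr" "finite E" "E \<inter> voters Pr = {}"
  shows "profile (voters Pr \<union> E, cands Pr, ballot Pr) \<and> F (voters Pr \<union> E, cands Pr, ballot Pr) = F Pr"
  using assms(3,4)
proof (induction E rule: finite_induct)
  case empty
  then show ?case
    using prof_eq[of Pr] assms(2) by simp
next
  case (insert v E)
  let ?Q = "(voters Pr \<union> E, cands Pr, ballot Pr)"
  have "profile ?Q" "F ?Q = F Pr" "v \<notin> voters ?Q"
    using insert by auto
  moreover have "profile (insert v (voters ?Q), cands ?Q, ballot ?Q)"
    using \<open>profile ?Q\<close> \<open>v \<notin> voters ?Q\<close> insert(4) unfolding profile_def by auto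
  ultimately show ?case
    using assms(1)[unfolded neutral_indifference_def, rule_format, of ?Q v] by simp
qed

lemma neutral_reversal_add_linear_pair:
  assumes "neutral_reversal F" "infinite (UNIV :: 'v set)" "profile (Pr :: ('v,'c) prof)"
    and L: "strict_weak_order (cands Pr) L"
      "\<forall>a \<in> cands Pr. \<forall>b \<in> cands Pr. a \<noteq> b \<longrightarrow> (a, b) \<in> L \<or> (b, a) \<in> L"
  shows "\<exists>Pr'. profile Pr' \<and> cands Pr' = cands Pr \<and> F Pr' = F Pr \<and>
     (\<forall>a \<in> cands Pr. \<forall>b \<in> cands Pr. a \<noteq> b \<longrightarrow>
        card (supporters Pr' a b) = Suc (card (supporters Pr a b)))"
proof -
  have fin: "finite (voters Pr)"
    using assms(3) by (rule profile_finite_voters)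
  obtain v1 where v1: "v1 \<notin> voters Pr"
    using ex_new_if_finite[OF assms(2) fin] by blast
  obtain v2 where v2: "v2 \<notin> insert v1 (voters Pr)"
    using ex_new_if_finite[OF assms(2)] fin by (meson finite_insert)
  define Pr' where "Pr' = (voters Pr \<union> {v1, v2}, cands Pr, (ballot Pr)(v1 := L, v2 := L\<inverse>))"
  have "F Pr' = F Pr"
    unfolding Pr'_def
    by (rule assms(1)[unfolded neutral_reversal_def, rule_format]) (use assms(3) L v1 v2 in auto)
  moreover have "profile Pr'"
    using assms(3) L(1) strict_weak_order_converse[OF L(1)] v1 v2 fin
    unfolding Pr'_def profile_def by auto
  moreover have "card (supporters Pr' a b) = Suc (card (supporters Pr a b))"
    if "a \<in> cands Pr" "b \<in> cands Pr" "a \<noteq> b" for a b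
  proof -
    have "(a, b) \<in> L \<longleftrightarrow> (b, a) \<notin> L"
      using L that strict_weak_order_asym[OF L(1)] by blast
    then have "supporters Pr' a b = insert (if (a, b) \<in> L then v1 else v2) (supporters Pr a b)"
      using v1 v2 unfolding Pr'_def supporters_def by (cases "(a, b) \<in> L") auto
    moreover have "finite (supporters Pr a b)" "v1 \<notin> supporters Pr a b" "v2 \<notin> supporters Pr a b"
      using v1 v2 fin unfolding supporters_def by auto
    ultimately show ?thesis
      by simp
  qed
  moreover have "cands Pr' = cands Pr"
    by (simp add: Pr'_def)
  ultimately show ?thesis
    by blast
qed

lemma neutral_reversal_add_linear_pairs:
  assumes "neutral_reversal F" "infinite (UNIV :: 'v set)" "profile (Pr :: ('v,'c) prof)"
  shows "\<exists>Q. profile Q \<and> cands Q = cands Pr \<and> F Q = F Pr \<and>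
     (\<forall>a \<in> cands Pr. \<forall>b \<in> cands Pr. a \<noteq> b \<longrightarrow>
        card (supporters Q a b) = card (supporters Pr a b) + k)"
proof (induction k)
  case 0
  show ?case
    using assms(3) by (intro exI[of _ Pr]) simp
next
  case (Suc k)
  then obtain Q where "profile Q" "cands Q = cands Pr" "F Q = F Pr"
    "\<forall>a \<in> cands Pr. \<forall>b \<in> cands Pr. a \<noteq> b \<longrightarrow>
      card (supporters Q a b) = card (supporters Pr a b) + k"
    by blast
  moreover obtain L where "strict_weak_order (cands Q) L"
    "\<forall>a \<in> cands Q. \<forall>b \<in> cands Q. a \<noteq> b \<longrightarrow> (a, b) \<in> L \<or> (b, a) \<in> L"
    using ex_linear_order[OF profile_finite_cands[OF \<open>profile Q\<close>]] by blast
  moreover obtain Q' where "profile Q'" "cands Q' = cands Q" "F Q' = F Q"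
    "\<forall>a \<in> cands Q. \<forall>b \<in> cands Q. a \<noteq> b \<longrightarrow>
      card (supporters Q' a b) = Suc (card (supporters Q a b))"
    using neutral_reversal_add_linear_pair[OF assms(1,2) \<open>profile Q\<close>] calculation(5,6) by blast
  ultimately show ?case
    by (intro exI[of _ Q']) simp
qed

lemma neutral_indifference_add_abstainers:
  assumes "neutral_indifference F" "infinite (UNIV :: 'v set)" "profile (Pr :: ('v,'c) prof)"
  shows "\<exists>Q. profile Q \<and> cands Q = cands Pr \<and> F Q = F Pr \<and> supporters Q = supporters Pr \<and>
    N \<le> card (abstainers Q)"
proof -
  have "infinite (UNIV - voters Pr)"
    using Diff_infinite_finite[OF profile_finite_voters[OF assms(3)] assms(2)] .
  then obtain E where "finite E" "card E = N" "E \<subseteq> UNIV - voters Pr"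
    using infinite_arbitrarily_large by blast
  then have E: "finite E" "card E = N" "E \<inter> voters Pr = {}"
    by auto
  define Q where "Q = (voters Pr \<union> E, cands Pr, ballot Pr)"
  have "profile Q" "F Q = F Pr"
    using neutral_indifference_Un_voters[OF assms(1,3) E(1,3)] unfolding Q_def by auto
  have E_abstain: "ballot Pr i = {}" if "i \<in> E" for i
    using profile_ballot_outside[OF assms(3)] that E(3) by blast
  then have "supporters Q = supporters Pr"
    unfolding Q_def supporters_def by (auto simp: fun_eq_iff)
  moreover have "E \<subseteq> abstainers Q"
    using E_abstain unfolding Q_def abstainers_def by auto
  then have "N \<le> card (abstainers Q)"
    using profile_finite_voters[OF \<open>profile Q\<close>] E(2) unfolding abstainers_def
    by (metis (no_types, lifting) card_mono finite_subset mem_Collect_eq subsetI)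
  ultimately show ?thesis
    using \<open>profile Q\<close> \<open>F Q = F Pr\<close> by (auto simp: Q_def)
qed

lemma exists_padded_profile:
  assumes "neutral_indifference F" "neutral_reversal F" "infinite (UNIV :: 'v set)"
    and "profile (Pr :: ('v,'c) prof)"
  shows "\<exists>Ps. profile Ps \<and> cands Ps = cands Pr \<and> margin Ps = margin Pr \<and> F Ps = F Pr \<and> padded Ps"
proof -
  let ?n = "card (voters Pr)"
  obtain Q where Q: "profile Q" "cands Q = cands Pr" "F Q = F Pr"
    and supp: "\<And>a b. a \<in> cands Pr \<Longrightarrow> b \<in> cands Pr \<Longrightarrow> a \<noteq> b \<Longrightarrow>
        card (supporters Q a b) = card (supporters Pr a b) + ?n"
    using neutral_reversal_add_linear_pairs[OF assms(2-4)] by blast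
  obtain Ps where Ps: "profile Ps" "cands Ps = cands Pr" "F Ps = F Pr" "supporters Ps = supporters Q"
    and abst: "card (cands Pr) * (2 * ?n) \<le> card (abstainers Ps)"
    using neutral_indifference_add_abstainers[OF assms(1,3) Q(1)] Q(2,3) by metis
  have bounds: "?n \<le> card (supporters Ps a b) \<and> card (supporters Ps a b) \<le> 2 * ?n"
    if "a \<in> cands Pr" "b \<in> cands Pr" "a \<noteq> b" for a b
  proof -
    have "card (supporters Pr a b) \<le> ?n"
      using profile_finite_voters[OF assms(4)] unfolding supporters_def by (intro card_mono) auto
    then show ?thesis
      using supp[OF that] Ps(4) by simp
  qed
  have "padded Ps"
    unfolding padded_def
  proof (intro ballI impI conjI)
    fix a b assume "a \<in> cands Ps" "b \<in> cands Ps" "a \<noteq> b"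
    then have ab: "a \<in> cands Pr" "b \<in> cands Pr" "a \<noteq> b"
      using Ps(2) by auto
    show "card (supporters Ps a b) \<le> 2 * card (supporters Ps b a)"
      using bounds[OF ab] bounds[of b a] ab by simp
    show "card (cands Ps) * card (supporters Ps a b) \<le> card (abstainers Ps)"
      using bounds[OF ab] abst Ps(2) by (metis mult_le_mono2 order_trans)
  qed
  moreover have "margin Ps = margin Pr"
    by (rule margin_eq_if_supporters_shift[OF assms(4) Ps(1), of ?n]) (use Ps(2,4) supp in simp_all)
  ultimately show ?thesis
    using Ps by blast
qed

section \<open>Maps with prescribed fibre sizes\<close>

definition has_fiber_cards :: "('v \<Rightarrow> 't) \<Rightarrow> 'v set \<Rightarrow> 't set \<Rightarrow> ('t \<Rightarrow> nat) \<Rightarrow> bool" where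
  "has_fiber_cards \<tau> A T d \<longleftrightarrow> \<tau> ` A \<subseteq> T \<and> (\<forall>t \<in> T. card {i \<in> A. \<tau> i = t} = d t)"

lemma ex_has_fiber_cards:
  assumes "finite T" "finite A" "(\<Sum>t \<in> T. d t) = card A"
  shows "\<exists>\<tau>. has_fiber_cards \<tau> A T d"
  using assms
proof (induction T arbitrary: A rule: finite_induct)
  case empty
  then show ?case
    by (simp add: has_fiber_cards_def)
next
  case (insert t T)
  then obtain S where S: "S \<subseteq> A" "card S = d t"
    by (metis le_add1 obtain_subset_with_card_n sum.insert)
  then have "(\<Sum>t \<in> T. d t) = card (A - S)"
    using insert by (simp add: card_Diff_subset finite_subset)
  then obtain \<tau> where \<tau>: "has_fiber_cards \<tau> (A - S) T d"
    using insert by blast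
  define \<tau>' where "\<tau>' i = (if i \<in> S then t else \<tau> i)" for i
  have "{i \<in> A. \<tau>' i = t} = S"
    using S(1) \<tau> insert(2) unfolding \<tau>'_def has_fiber_cards_def by auto
  moreover have "{i \<in> A. \<tau>' i = s} = {i \<in> A - S. \<tau> i = s}" if "s \<in> T" for s
    using that insert(2) unfolding \<tau>'_def by auto
  ultimately have "has_fiber_cards \<tau>' A (insert t T) d"
    using \<tau> S(2) unfolding has_fiber_cards_def \<tau>'_def by auto
  then show ?case
    by blast
qed

lemma has_fiber_cards_Un:
  assumes "has_fiber_cards \<tau>1 A S d" "has_fiber_cards \<tau>2 B T d"
    and "finite A" "finite B" "A \<inter> B = {}" "S \<inter> T = {}"
  shows "has_fiber_cards (\<lambda>i. if i \<in> A then \<tau>1 i else \<tau>2 i) (A \<union> B) (S \<union> T) d"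
proof -
  let ?\<tau> = "\<lambda>i. if i \<in> A then \<tau>1 i else \<tau>2 i"
  have fiber_S: "{i \<in> A \<union> B. ?\<tau> i = t} = {i \<in> A. \<tau>1 i = t}" if "t \<in> S" for t
    using assms(2,5,6) that unfolding has_fiber_cards_def by (auto simp: image_subset_iff disjoint_iff)
  have fiber_T: "{i \<in> A \<union> B. ?\<tau> i = t} = {i \<in> B. \<tau>2 i = t}" if "t \<in> T" for t
    using assms(1,5,6) that unfolding has_fiber_cards_def by (auto simp: image_subset_iff disjoint_iff)
  have "card {i \<in> A \<union> B. ?\<tau> i = t} = d t" if "t \<in> S \<union> T" for t
  proof (cases "t \<in> S")
    case True
    show ?thesis
      unfolding fiber_S[OF True] using assms(1) True unfolding has_fiber_cards_def by blast
  next
    case False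
    then have "t \<in> T"
      using that by blast
    show ?thesis
      unfolding fiber_T[OF \<open>t \<in> T\<close>] using assms(2) \<open>t \<in> T\<close> unfolding has_fiber_cards_def by blast
  qed
  then show ?thesis
    using assms(1,2) unfolding has_fiber_cards_def by auto
qed

lemma has_fiber_cards_card_vimage:
  assumes "has_fiber_cards \<tau> A T d" "finite A" "U \<subseteq> T" "finite U"
  shows "card {i \<in> A. \<tau> i \<in> U} = (\<Sum>t \<in> U. d t)"
proof -
  have "{i \<in> A. \<tau> i \<in> U} = (\<Union>t \<in> U. {i \<in> A. \<tau> i = t})"
    by auto
  also have "card \<dots> = (\<Sum>t \<in> U. card {i \<in> A. \<tau> i = t})"
    using assms(2,4) by (intro card_UN_disjoint) auto
  also have "\<dots> = (\<Sum>t \<in> U. d t)"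
    using assms(1,3) unfolding has_fiber_cards_def by (intro sum.cong) auto
  finally show ?thesis .
qed

section \<open>Cyclic profiles\<close>

datatype ballot_type = Top_two nat | Top_one nat | Blank

definition type_count :: "nat \<Rightarrow> nat \<Rightarrow> nat \<Rightarrow> ballot_type \<Rightarrow> nat" where
  "type_count m c b t = (case t of Top_two _ \<Rightarrow> m | Top_one _ \<Rightarrow> c | Blank \<Rightarrow> b)"

lemma type_count_simps [simp]:
  "type_count m c b (Top_two j) = m" "type_count m c b (Top_one j) = c" "type_count m c b Blank = b"
  unfolding type_count_def by simp_all

locale cycle =
  fixes n :: nat and a :: "nat \<Rightarrow> 'c"
  assumes three_le: "3 \<le> n" and inj_a: "inj_on a {..<n}"
begin

definition nxt :: "nat \<Rightarrow> nat" where
  "nxt u = (if Suc u = n then 0 else Suc u)"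

definition prv :: "nat \<Rightarrow> nat" where
  "prv u = (if u = 0 then n - 1 else u - 1)"

lemma nxt_less: "u < n \<Longrightarrow> nxt u < n"
  and prv_less: "u < n \<Longrightarrow> prv u < n"
  and nxt_prv: "u < n \<Longrightarrow> nxt (prv u) = u"
  and prv_nxt: "u < n \<Longrightarrow> prv (nxt u) = u"
  and nxt_neq: "u \<noteq> nxt u"
  and prv_neq: "u < n \<Longrightarrow> prv u \<noteq> u"
  and nxt_nxt_neq: "u < n \<Longrightarrow> nxt (nxt u) \<noteq> u"
  and nxt_last: "nxt (n - 1) = 0"
  unfolding nxt_def prv_def using three_le by auto

lemma nxt_inj: "u < n \<Longrightarrow> v < n \<Longrightarrow> nxt u = nxt v \<longleftrightarrow> u = v"
  by (metis prv_nxt)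

lemma nxt_eq_iff: "j < n \<Longrightarrow> u < n \<Longrightarrow> nxt j = u \<longleftrightarrow> j = prv u"
  by (metis nxt_prv prv_nxt)

lemma cycle_induct:
  assumes "u < n" "v < n" "P u" and step: "\<And>w. w < n \<Longrightarrow> P w \<Longrightarrow> P (nxt w)"
  shows "P v"
proof -
  have up: "P (w + d)" if "P w" "w + d < n" for w d
    using that(2)
  proof (induction d)
    case (Suc d)
    then show ?case
      using step[of "w + d"] by (simp add: nxt_def)
  qed (use that(1) in simp)
  have "P (n - 1)"
    using up[of u "n - 1 - u"] assms(1,3) by simp
  then have "P (nxt (n - 1))"
    using step[of "n - 1"] three_le by simp
  then have "P 0"
    by (simp only: nxt_last)
  then show ?thesis
    using up[of 0 v] assms(2) by simp
qed

text \<open>Indices are taken modulo \<open>n\<close>. A ballot of type \<open>Top_two j\<close> ranks \<open>a\<^sub>j\<close> first,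
  \<open>a\<^sub>j\<^sub>+\<^sub>1\<close> second and ties all other candidates last; \<open>Top_one j\<close> ranks \<open>a\<^sub>j\<close> alone first;
  \<open>Blank\<close> is empty. If each \<open>Top_two j\<close> occurs \<open>m\<close> times and each \<open>Top_one j\<close> \<open>c\<close> times,
  then \<open>a\<^sub>u\<close> is ranked above \<open>a\<^sub>v\<close> by the voters of types \<open>Top_two u\<close> and \<open>Top_one u\<close>, and by
  those of type \<open>Top_two (u - 1)\<close> unless \<open>v = u - 1\<close>; so the only nonzero margins are \<open>m\<close>
  along the edges \<open>a\<^sub>u \<rightarrow> a\<^sub>u\<^sub>+\<^sub>1\<close>.\<close>

definition score :: "ballot_type \<Rightarrow> nat \<Rightarrow> nat" where
  "score t u = (case t of
      Top_two j \<Rightarrow> if u = j then 2 else if u = nxt j then 1 else 0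
    | Top_one j \<Rightarrow> if u = j then 1 else 0
    | Blank \<Rightarrow> 0)"

definition types :: "ballot_type set" where
  "types = Top_two ` {..<n} \<union> Top_one ` {..<n} \<union> {Blank}"

definition rotate :: "ballot_type \<Rightarrow> ballot_type" where
  "rotate t = (case t of Top_two j \<Rightarrow> Top_two (nxt j) | Top_one j \<Rightarrow> Top_one (nxt j) | Blank \<Rightarrow> Blank)"

lemma finite_types: "finite types"
  unfolding types_def by simp

lemma inj_on_rotate: "inj_on rotate types"
  unfolding inj_on_def types_def rotate_def by (auto simp: nxt_inj)

lemma rotate_types: "rotate ` types = types"
proof (rule endo_inj_surj[OF finite_types _ inj_on_rotate])
  show "rotate ` types \<subseteq> types"
    unfolding types_def rotate_def using nxt_less by auto
qed

lemma score_rotate: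
  assumes "t \<in> types" "u < n"
  shows "score (rotate t) (nxt u) = score t u"
proof (cases t)
  case (Top_two j)
  then have "j < n"
    using assms(1) unfolding types_def by auto
  then show ?thesis
    using assms(2) Top_two by (simp add: score_def rotate_def nxt_inj nxt_less)
qed (use assms in \<open>auto simp: score_def rotate_def nxt_inj types_def\<close>)

lemma types_preferring:
  assumes "u < n" "v < n" "u \<noteq> v"
  shows "{t \<in> types. score t v < score t u} =
    {Top_two u, Top_one u} \<union> (if v = prv u then {} else {Top_two (prv u)})"
proof -
  have "score (Top_two j) v < score (Top_two j) u \<longleftrightarrow> j = u \<or> (j = prv u \<and> v \<noteq> prv u)"
    if "j < n" for j
    using assms that nxt_eq_iff[OF that assms(1)] unfolding score_def by auto
  moreover have "score (Top_one j) v < score (Top_one j) u \<longleftrightarrow> j = u" for j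
    using assms(3) unfolding score_def by auto
  moreover have "\<not> score Blank v < score Blank u"
    unfolding score_def by simp
  ultimately show ?thesis
    using assms prv_less unfolding types_def by auto
qed

definition cycle_cands :: "'c set" where
  "cycle_cands = a ` {..<n}"

definition idx :: "'c \<Rightarrow> nat" where
  "idx c = inv_into {..<n} a c"

definition type_ballot :: "ballot_type \<Rightarrow> ('c \<times> 'c) set" where
  "type_ballot t = score_order cycle_cands (\<lambda>c. score t (idx c))"

definition rotate_cand :: "'c \<Rightarrow> 'c" where
  "rotate_cand c = a (nxt (idx c))"

lemma idx_a: "u < n \<Longrightarrow> idx (a u) = u"
  unfolding idx_def using inj_a by (simp add: inv_into_f_f)

lemma a_in_cycle_cands: "u < n \<Longrightarrow> a u \<in> cycle_cands"
  unfolding cycle_cands_def by simp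

lemma rotate_cand_a: "u < n \<Longrightarrow> rotate_cand (a u) = a (nxt u)"
  unfolding rotate_cand_def by (simp add: idx_a)

lemma strict_weak_order_type_ballot: "strict_weak_order cycle_cands (type_ballot t)"
  unfolding type_ballot_def by (rule strict_weak_order_score_order)

lemma type_ballot_iff: "u < n \<Longrightarrow> v < n \<Longrightarrow> (a u, a v) \<in> type_ballot t \<longleftrightarrow> score t v < score t u"
  unfolding type_ballot_def score_order_def cycle_cands_def by (auto simp: idx_a)

lemma bij_betw_rotate_cand: "bij_betw rotate_cand cycle_cands cycle_cands"
proof -
  have "rotate_cand ` cycle_cands = a ` nxt ` {..<n}"
    unfolding cycle_cands_def by (auto simp: rotate_cand_a image_image)
  moreover have "nxt ` {..<n} = {..<n}"
    using nxt_less nxt_inj by (intro endo_inj_surj) (auto simp: inj_on_def)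
  moreover have "inj_on rotate_cand cycle_cands"
    unfolding cycle_cands_def inj_on_def
    using inj_on_eq_iff[OF inj_a] nxt_less nxt_inj by (auto simp: rotate_cand_a)
  ultimately show ?thesis
    unfolding bij_betw_def cycle_cands_def by simp
qed

lemma type_ballot_subset: "type_ballot t \<subseteq> cycle_cands \<times> cycle_cands"
  using strict_weak_order_subset[OF strict_weak_order_type_ballot] .

lemma rotate_type_ballot:
  assumes "t \<in> types"
  shows "map_prod rotate_cand rotate_cand ` type_ballot t = type_ballot (rotate t)"
proof
  show "map_prod rotate_cand rotate_cand ` type_ballot t \<subseteq> type_ballot (rotate t)"
  proof clarify
    fix c d assume "(c, d) \<in> type_ballot t"
    moreover obtain u v where "u < n" "v < n" "c = a u" "d = a v"
      using type_ballot_subset \<open>(c, d) \<in> type_ballot t\<close> unfolding cycle_cands_def by blast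
    ultimately show "(rotate_cand c, rotate_cand d) \<in> type_ballot (rotate t)"
      using type_ballot_iff score_rotate[OF assms] nxt_less by (simp add: rotate_cand_a)
  qed
  show "type_ballot (rotate t) \<subseteq> map_prod rotate_cand rotate_cand ` type_ballot t"
  proof clarify
    fix c d assume cd: "(c, d) \<in> type_ballot (rotate t)"
    moreover obtain u v where uv: "u < n" "v < n" "c = a (nxt (prv u))" "d = a (nxt (prv v))"
      using type_ballot_subset cd nxt_prv unfolding cycle_cands_def by force
    ultimately have "(a (prv u), a (prv v)) \<in> type_ballot t"
      using type_ballot_iff score_rotate[OF assms] nxt_less prv_less by simp
    moreover have "(c, d) = map_prod rotate_cand rotate_cand (a (prv u), a (prv v))"
      using uv prv_less by (simp add: rotate_cand_a)
    ultimately show "(c, d) \<in> map_prod rotate_cand rotate_cand ` type_ballot t"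
      by blast
  qed
qed

definition cyclic_prof :: "'v set \<Rightarrow> ('v \<Rightarrow> ballot_type) \<Rightarrow> ('v, 'c) prof" where
  "cyclic_prof V \<tau> = (V, cycle_cands, \<lambda>i. if i \<in> V then type_ballot (\<tau> i) else {})"

lemma cyclic_prof_simps [simp]:
  "voters (cyclic_prof V \<tau>) = V"
  "cands (cyclic_prof V \<tau>) = cycle_cands"
  "i \<in> V \<Longrightarrow> ballot (cyclic_prof V \<tau>) i = type_ballot (\<tau> i)"
  unfolding cyclic_prof_def by simp_all

lemma finite_cycle_cands: "finite cycle_cands"
  unfolding cycle_cands_def by simp

lemma card_cycle_cands: "card cycle_cands = n"
  unfolding cycle_cands_def using card_image[OF inj_a] by simp

lemma profile_cyclic_prof: "finite V \<Longrightarrow> V \<noteq> {} \<Longrightarrow> profile (cyclic_prof V \<tau>)"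
  unfolding profile_def using finite_cycle_cands a_in_cycle_cands[of 0] three_le
  by (auto simp: strict_weak_order_type_ballot cyclic_prof_def)

lemma card_supporters_cyclic_prof:
  assumes "finite V" "has_fiber_cards \<tau> V types (type_count m c b)" "u < n" "v < n" "u \<noteq> v"
  shows "card (supporters (cyclic_prof V \<tau>) (a u) (a v)) = m + c + (if v = prv u then 0 else m)"
proof -
  have "supporters (cyclic_prof V \<tau>) (a u) (a v) = {i \<in> V. \<tau> i \<in> {t \<in> types. score t v < score t u}}"
    using assms(2,3,4) type_ballot_iff unfolding supporters_def has_fiber_cards_def by auto
  also have "card \<dots> = (\<Sum>t \<in> {t \<in> types. score t v < score t u}. type_count m c b t)"
    using assms(1,2) finite_types by (intro has_fiber_cards_card_vimage) auto
  also have "\<dots> = m + c + (if v = prv u then 0 else m)"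
    using prv_neq[OF assms(3)] unfolding types_preferring[OF assms(3-5)] by auto
  finally show ?thesis .
qed

lemma margin_cyclic_prof:
  assumes "finite V" "has_fiber_cards \<tau> V types (type_count m c b)" "u < n" "v < n"
  shows "margin (cyclic_prof V \<tau>) (a u) (a v) =
    (if v = nxt u then int m else if u = nxt v then - int m else 0)"
proof (cases "u = v")
  case False
  moreover have "v = nxt u \<longleftrightarrow> u = prv v" "u = nxt v \<longleftrightarrow> v = prv u"
    using nxt_eq_iff[OF assms(3,4)] nxt_eq_iff[OF assms(4,3)] by auto
  moreover have "\<not> (v = nxt u \<and> u = nxt v)"
    using nxt_nxt_neq[OF assms(3)] by metis
  ultimately show ?thesis
    using card_supporters_cyclic_prof[OF assms(1,2)] assms(3,4) by (auto simp: margin_supporters)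
qed (simp add: nxt_neq margin_def)

lemma card_rotate_fiber:
  assumes "has_fiber_cards \<tau> V types (type_count m c b)"
  shows "card {i \<in> V. rotate (\<tau> i) = t} = card {i \<in> V. \<tau> i = t}"
proof (cases "t \<in> types")
  case True
  then obtain s where s: "s \<in> types" "t = rotate s"
    using rotate_types by blast
  then have "{i \<in> V. rotate (\<tau> i) = t} = {i \<in> V. \<tau> i = s}"
    using assms inj_onD[OF inj_on_rotate] unfolding has_fiber_cards_def by auto
  moreover have "type_count m c b (rotate s) = type_count m c b s"
    by (cases s) (simp_all add: rotate_def)
  ultimately show ?thesis
    using assms s True unfolding has_fiber_cards_def by auto
next
  case False
  then have "{i \<in> V. rotate (\<tau> i) = t} = {}" "{i \<in> V. \<tau> i = t} = {}"
    using assms rotate_types unfolding has_fiber_cards_def by auto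
  then show ?thesis
    by (simp only:)
qed

text \<open>Rotating the cycle permutes the ballot types without changing their multiplicities, so
  some permutation of the voters undoes it; by Anonymity and Neutrality \<open>F\<close> is invariant
  under the rotation.\<close>

lemma cycle_cands_subset_F:
  assumes "VSCC F" "anonymity F" "neutrality F" "finite V" "V \<noteq> {}"
    and \<tau>: "has_fiber_cards \<tau> V types (type_count m c b)"
  shows "cycle_cands \<subseteq> F (cyclic_prof V \<tau>)"
proof -
  let ?P = "cyclic_prof V \<tau>"
  obtain \<sigma> where \<sigma>: "bij_betw \<sigma> V V" "\<And>i. i \<in> V \<Longrightarrow> \<tau> (\<sigma> i) = rotate (\<tau> i)"
    using ex_bij_betw_fiber_card_eq[OF assms(4), of "\<lambda>i. rotate (\<tau> i)" \<tau>] card_rotate_fiber[OF \<tau>]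
    by auto
  have "\<tau> i \<in> types" if "i \<in> V" for i
    using \<tau> that unfolding has_fiber_cards_def by auto
  then have "ballot ?P (\<sigma> i) = map_prod rotate_cand rotate_cand ` ballot ?P i" if "i \<in> V" for i
    using that \<sigma> bij_betw_apply[OF \<sigma>(1)] rotate_type_ballot by simp
  then have rotate_in_F: "a (nxt u) \<in> F ?P \<longleftrightarrow> a u \<in> F ?P" if "u < n" for u
    using anonymity_neutrality_invariant[OF assms(2,3) profile_cyclic_prof[OF assms(4,5), of \<tau>],
        of rotate_cand \<sigma> "a u"] bij_betw_rotate_cand \<sigma>(1) a_in_cycle_cands that
    by (simp add: rotate_cand_a)
  obtain u where "u < n" "a u \<in> F ?P"
    using VSCCD[OF assms(1) profile_cyclic_prof[OF assms(4,5), of \<tau>]] by (auto simp: cycle_cands_def)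
  then have "a v \<in> F ?P" if "v < n" for v
    using cycle_induct[of u v "\<lambda>w. a w \<in> F ?P"] rotate_in_F that by blast
  then show ?thesis
    unfolding cycle_cands_def by auto
qed

text \<open>For the end points \<open>x = a\<^sub>n\<^sub>-\<^sub>1\<close> and \<open>y = a\<^sub>0\<close>, the voters preferring \<open>x\<close> receive the
  types \<open>Top_two (n - 1)\<close>, \<open>Top_two (n - 2)\<close>, \<open>Top_one (n - 1)\<close> (\<open>2m + c\<close> ballots), those
  preferring \<open>y\<close> the types \<open>Top_two 0\<close>, \<open>Top_one 0\<close> (\<open>m + c\<close> ballots), and the
  indifferent voters all other types. This fits because \<open>x\<close> has exactly \<open>m\<close> more supporters
  than \<open>y\<close>.\<close>

definition prefer_first_types :: "ballot_type set" where
  "prefer_first_types = {Top_two 0, Top_one 0}"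

definition prefer_last_types :: "ballot_type set" where
  "prefer_last_types = {Top_two (n - 1), Top_two (n - 2), Top_one (n - 1)}"

definition indifferent_types :: "ballot_type set" where
  "indifferent_types = Top_two ` {1..n - 3} \<union> Top_one ` {1..n - 2} \<union> {Blank}"

lemma type_ballot_prefer_first:
  "t \<in> prefer_first_types \<Longrightarrow> (a 0, a (n - 1)) \<in> type_ballot t \<and> (a (n - 1), a 0) \<notin> type_ballot t"
  using three_le unfolding prefer_first_types_def
  by (auto simp: type_ballot_iff score_def nxt_def split: if_splits)

lemma type_ballot_prefer_last:
  "t \<in> prefer_last_types \<Longrightarrow> (a (n - 1), a 0) \<in> type_ballot t \<and> (a 0, a (n - 1)) \<notin> type_ballot t"
  using three_le unfolding prefer_last_types_def
  by (auto simp: type_ballot_iff score_def nxt_def split: if_splits)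

lemma type_ballot_indifferent:
  "t \<in> indifferent_types \<Longrightarrow> (a (n - 1), a 0) \<notin> type_ballot t \<and> (a 0, a (n - 1)) \<notin> type_ballot t"
  using three_le unfolding indifferent_types_def
  by (auto simp: type_ballot_iff score_def nxt_def split: if_splits)

lemma types_partition:
  "prefer_first_types \<union> prefer_last_types \<union> indifferent_types = types"
  "prefer_first_types \<inter> prefer_last_types = {}"
  "(prefer_first_types \<union> prefer_last_types) \<inter> indifferent_types = {}"
  using three_le
  unfolding prefer_first_types_def prefer_last_types_def indifferent_types_def types_def
  by (auto simp: image_iff)

lemma sum_type_count_prefer_first: "(\<Sum>t \<in> prefer_first_types. type_count m c b t) = m + c"
  unfolding prefer_first_types_def by simp

lemma sum_type_count_prefer_last: "(\<Sum>t \<in> prefer_last_types. type_count m c b t) = 2 * m + c"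
  using three_le unfolding prefer_last_types_def by simp

lemma sum_type_count_indifferent:
  "(\<Sum>t \<in> indifferent_types. type_count m c b t) = (n - 3) * m + (n - 2) * c + b"
proof -
  have "(\<Sum>t \<in> Top_two ` {1..n - 3}. type_count m c b t) = (n - 3) * m"
    by (subst sum.reindex) (auto simp: inj_on_def)
  moreover have "(\<Sum>t \<in> Top_one ` {1..n - 2}. type_count m c b t) = (n - 2) * c"
    by (subst sum.reindex) (auto simp: inj_on_def)
  ultimately show ?thesis
    unfolding indifferent_types_def by (subst sum.union_disjoint; auto)+
qed

lemma exists_cyclic_assignment:
  assumes "finite V" "V = G_first \<union> G_last \<union> G_indiff"
    and "G_first \<inter> G_last = {}" "(G_first \<union> G_last) \<inter> G_indiff = {}"
    and "card G_last = card G_first + m" "m \<le> card G_first" "(n - 2) * card G_first \<le> card G_indiff"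
  shows "\<exists>\<tau> c b. has_fiber_cards \<tau> V types (type_count m c b) \<and>
    \<tau> ` G_first \<subseteq> prefer_first_types \<and> \<tau> ` G_last \<subseteq> prefer_last_types \<and>
    \<tau> ` G_indiff \<subseteq> indifferent_types"
proof -
  define c where "c = card G_first - m"
  define b where "b = card G_indiff - ((n - 3) * m + (n - 2) * c)"
  have fin: "finite G_first" "finite G_last" "finite G_indiff"
    using assms(1,2) by auto
  have fin_types: "finite prefer_first_types" "finite prefer_last_types" "finite indifferent_types"
    using finite_types types_partition(1) by (metis finite_Un)+
  have "(n - 3) * m + (n - 2) * c \<le> (n - 2) * m + (n - 2) * c"
    by (intro add_le_mono1 mult_le_mono1) simp
  also have "\<dots> = (n - 2) * card G_first"
    using assms(6) unfolding c_def by (simp flip: add_mult_distrib2)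
  finally have "(n - 3) * m + (n - 2) * c \<le> (n - 2) * card G_first" .
  then have "(\<Sum>t \<in> indifferent_types. type_count m c b t) = card G_indiff"
    using assms(7) unfolding sum_type_count_indifferent b_def by simp
  then obtain \<tau>I where \<tau>I: "has_fiber_cards \<tau>I G_indiff indifferent_types (type_count m c b)"
    using ex_has_fiber_cards[OF fin_types(3) fin(3)] by blast
  have "(\<Sum>t \<in> prefer_first_types. type_count m c b t) = card G_first"
    using assms(6) unfolding sum_type_count_prefer_first c_def by simp
  then obtain \<tau>F where \<tau>F: "has_fiber_cards \<tau>F G_first prefer_first_types (type_count m c b)"
    using ex_has_fiber_cards[OF fin_types(1) fin(1)] by blast
  have "(\<Sum>t \<in> prefer_last_types. type_count m c b t) = card G_last"
    using assms(5,6) unfolding sum_type_count_prefer_last c_def by simp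
  then obtain \<tau>L where \<tau>L: "has_fiber_cards \<tau>L G_last prefer_last_types (type_count m c b)"
    using ex_has_fiber_cards[OF fin_types(2) fin(2)] by blast
  have "has_fiber_cards (\<lambda>i. if i \<in> G_first \<union> G_last then if i \<in> G_first then \<tau>F i else \<tau>L i else \<tau>I i)
      V types (type_count m c b)"
    unfolding assms(2) types_partition(1)[symmetric]
    by (intro has_fiber_cards_Un \<tau>F \<tau>L \<tau>I) (use fin assms(3,4) types_partition in auto)
  moreover have "(\<lambda>i. if i \<in> G_first \<union> G_last then if i \<in> G_first then \<tau>F i else \<tau>L i else \<tau>I i) ` G_first
      \<subseteq> prefer_first_types"
    using \<tau>F unfolding has_fiber_cards_def by auto
  moreover have "(\<lambda>i. if i \<in> G_first \<union> G_last then if i \<in> G_first then \<tau>F i else \<tau>L i else \<tau>I i) ` G_last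
      \<subseteq> prefer_last_types"
    using \<tau>L assms(3) unfolding has_fiber_cards_def by auto
  moreover have "(\<lambda>i. if i \<in> G_first \<union> G_last then if i \<in> G_first then \<tau>F i else \<tau>L i else \<tau>I i) ` G_indiff
      \<subseteq> indifferent_types"
    using \<tau>I assms(4) unfolding has_fiber_cards_def by auto
  ultimately show ?thesis
    by blast
qed

lemma exists_cyclic_prof_agreeing:
  assumes "profile Ps"
    and "card (supporters Ps (a (n - 1)) (a 0)) = card (supporters Ps (a 0) (a (n - 1))) + m"
    and "m \<le> card (supporters Ps (a 0) (a (n - 1)))"
    and "(n - 2) * card (supporters Ps (a 0) (a (n - 1))) \<le> card (abstainers Ps)"
  shows "\<exists>\<tau> c b. has_fiber_cards \<tau> (voters Ps) types (type_count m c b) \<and>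
    restrict_prof (cyclic_prof (voters Ps) \<tau>) {a (n - 1), a 0} = restrict_prof Ps {a (n - 1), a 0}"
proof -
  let ?x = "a (n - 1)" and ?y = "a 0"
  let ?G_first = "supporters Ps ?y ?x" and ?G_last = "supporters Ps ?x ?y"
  let ?G_indiff = "voters Ps - (?G_first \<union> ?G_last)"
  have "abstainers Ps \<subseteq> ?G_indiff"
    unfolding abstainers_def supporters_def by auto
  then have "card (abstainers Ps) \<le> card ?G_indiff"
    using profile_finite_voters[OF assms(1)] by (intro card_mono) auto
  then obtain \<tau> c b where \<tau>: "has_fiber_cards \<tau> (voters Ps) types (type_count m c b)"
    and first: "\<tau> ` ?G_first \<subseteq> prefer_first_types" and last: "\<tau> ` ?G_last \<subseteq> prefer_last_types"
    and indiff: "\<tau> ` ?G_indiff \<subseteq> indifferent_types"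
    using exists_cyclic_assignment[OF profile_finite_voters[OF assms(1)], of ?G_first ?G_last ?G_indiff m]
      supporters_disjoint[OF assms(1)] assms(2-4)
    unfolding supporters_def by fastforce
  have "ballot (cyclic_prof (voters Ps) \<tau>) i \<inter> {?x, ?y} \<times> {?x, ?y} = ballot Ps i \<inter> {?x, ?y} \<times> {?x, ?y}"
    if "i \<in> voters Ps" for i
  proof (rule restrict_pair_eqI[OF _ profile_ballot[OF assms(1) that]])
    show "strict_weak_order cycle_cands (ballot (cyclic_prof (voters Ps) \<tau>) i)"
      using that strict_weak_order_type_ballot by simp
    have "i \<in> ?G_first \<or> i \<in> ?G_last \<or> i \<in> ?G_indiff"
      using that by blast
    then show "(?x, ?y) \<in> ballot (cyclic_prof (voters Ps) \<tau>) i \<longleftrightarrow> (?x, ?y) \<in> ballot Ps i"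
      and "(?y, ?x) \<in> ballot (cyclic_prof (voters Ps) \<tau>) i \<longleftrightarrow> (?y, ?x) \<in> ballot Ps i"
      using that first last indiff type_ballot_prefer_first type_ballot_prefer_last type_ballot_indifferent
        supporters_disjoint[OF assms(1)]
      unfolding supporters_def by auto
  qed
  moreover have "ballot (cyclic_prof (voters Ps) \<tau>) i = ballot Ps i" if "i \<notin> voters Ps" for i
    using that profile_ballot_outside[OF assms(1)] by (simp add: cyclic_prof_def)
  ultimately have "\<forall>i. ballot (cyclic_prof (voters Ps) \<tau>) i \<inter> {?x, ?y} \<times> {?x, ?y} = ballot Ps i \<inter> {?x, ?y} \<times> {?x, ?y}"
    by metis
  then have "restrict_prof (cyclic_prof (voters Ps) \<tau>) {?x, ?y} = restrict_prof Ps {?x, ?y}"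
    unfolding restrict_prof_def by simp
  then show ?thesis
    using \<tau> by blast
qed

lemma coh_rel_cyclic_prof:
  assumes "profile Ps" "cycle_cands \<subseteq> cands Ps"
    and \<tau>: "has_fiber_cards \<tau> (voters Ps) types (type_count m c b)"
    and agree: "restrict_prof (cyclic_prof (voters Ps) \<tau>) {a (n - 1), a 0} = restrict_prof Ps {a (n - 1), a 0}"
    and edges: "\<And>u. u < n \<Longrightarrow> int m \<le> margin Ps (a u) (a (nxt u))"
  shows "coh_rel Ps (a (n - 1)) (a 0) (cyclic_prof (voters Ps) \<tau>)"
  unfolding coh_rel_def
proof (intro conjI ballI)
  let ?P = "cyclic_prof (voters Ps) \<tau>"
  show "restrict_prof Ps {a (n - 1), a 0} = restrict_prof ?P {a (n - 1), a 0}"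
    using agree by simp
  show "{a (n - 1), a 0} \<subseteq> cands ?P"
    using three_le a_in_cycle_cands by simp
  show "cands ?P \<subseteq> cands Ps"
    using assms(2) by simp
  fix c d assume "c \<in> cands ?P" "d \<in> cands ?P"
  then obtain u v where uv: "u < n" "v < n" "c = a u" "d = a v"
    by (auto simp: cycle_cands_def)
  have margin_P: "margin ?P c d = (if v = nxt u then int m else if u = nxt v then - int m else 0)"
    using margin_cyclic_prof[OF profile_finite_voters[OF assms(1)] \<tau> uv(1,2)] uv by simp
  show "0 < margin ?P c d \<longrightarrow> 0 < margin Ps c d \<and> margin ?P c d \<le> margin Ps c d"
    using edges[OF uv(1)] uv margin_P by auto
  show "{c, d} = {a (n - 1), a 0} \<longrightarrow> margin ?P c d = margin Ps c d"
    using margin_eq_if_restrict_prof_eq[OF agree] margin_eq_if_restrict_prof_eq[of ?P "a 0" "a (n - 1)" Ps]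
      agree by (auto simp: doubleton_eq_iff insert_commute)
qed

lemma exists_coherent_cyclic_profile:
  assumes "VSCC F" "anonymity F" "neutrality F" "profile Ps" "padded Ps" "cycle_cands \<subseteq> cands Ps"
    and closing: "0 < margin Ps (a (n - 1)) (a 0)"
    and weakest: "\<And>u. u < n - 1 \<Longrightarrow> margin Ps (a (n - 1)) (a 0) \<le> margin Ps (a u) (a (Suc u))"
  shows "\<exists>P'. profile P' \<and> coh_rel Ps (a (n - 1)) (a 0) P' \<and> a 0 \<in> F P'"
proof -
  let ?x = "a (n - 1)" and ?y = "a 0"
  define m where "m = nat (margin Ps ?x ?y)"
  have "?x \<noteq> ?y" "?x \<in> cands Ps" "?y \<in> cands Ps"
    using closing a_in_cycle_cands[of 0] a_in_cycle_cands[of "n - 1"] three_le assms(6)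
    by (auto simp: margin_def)
  have m_supp: "card (supporters Ps ?x ?y) = card (supporters Ps ?y ?x) + m"
    using closing unfolding m_def margin_supporters by linarith
  have "m \<le> card (supporters Ps ?y ?x)"
    using m_supp paddedD(1)[OF assms(5) \<open>?x \<in> cands Ps\<close> \<open>?y \<in> cands Ps\<close> \<open>?x \<noteq> ?y\<close>] by simp
  have "n \<le> card (cands Ps)"
    using card_mono[OF profile_finite_cands[OF assms(4)] assms(6)] by (simp add: card_cycle_cands)
  then have "(n - 2) * card (supporters Ps ?y ?x) \<le> card (cands Ps) * card (supporters Ps ?y ?x)"
    by (intro mult_le_mono1) simp
  also have "\<dots> \<le> card (abstainers Ps)"
    using paddedD(2)[OF assms(5) \<open>?y \<in> cands Ps\<close> \<open>?x \<in> cands Ps\<close>] \<open>?x \<noteq> ?y\<close> by simp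
  finally obtain \<tau> c b where \<tau>: "has_fiber_cards \<tau> (voters Ps) types (type_count m c b)"
    and agree: "restrict_prof (cyclic_prof (voters Ps) \<tau>) {?x, ?y} = restrict_prof Ps {?x, ?y}"
    using exists_cyclic_prof_agreeing[OF assms(4) m_supp \<open>m \<le> card (supporters Ps ?y ?x)\<close>] by blast
  have "int m \<le> margin Ps (a u) (a (nxt u))" if "u < n" for u
  proof (cases "u = n - 1")
    case True
    show ?thesis
      unfolding True nxt_last using closing by (simp add: m_def)
  next
    case False
    then have "nxt u = Suc u" "u < n - 1"
      using that by (auto simp: nxt_def)
    then show ?thesis
      using closing weakest[of u] by (simp add: m_def)
  qed
  then have "coh_rel Ps ?x ?y (cyclic_prof (voters Ps) \<tau>)"
    using coh_rel_cyclic_prof[OF assms(4,6) \<tau> agree] by blast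
  moreover have "finite (voters Ps)" "voters Ps \<noteq> {}"
    using assms(4) unfolding profile_def by auto
  ultimately show ?thesis
    using profile_cyclic_prof cycle_cands_subset_F[OF assms(1-3) _ _ \<tau>] a_in_cycle_cands[of 0] three_le
    by (intro exI[of _ "cyclic_prof (voters Ps) \<tau>"]) auto
qed

end

section \<open>Majority paths and the main theorem\<close>

lemma cycle_majority_path:
  assumes "majority_path Pr p y x" "0 < margin Pr x y"
  shows "cycle (length p) (\<lambda>u. p ! u)" "p ! 0 = y" "p ! (length p - 1) = x" "set p \<subseteq> cands Pr"
proof -
  have "2 \<le> length p" "distinct p" "hd p = y" "last p = x"
    and edges: "\<And>k. k < length p - 1 \<Longrightarrow> 0 < margin Pr (p ! k) (p ! Suc k)"
    using assms(1) unfolding majority_path_def by auto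
  moreover have "p \<noteq> []"
    using \<open>2 \<le> length p\<close> by auto
  ultimately show "p ! 0 = y" "p ! (length p - 1) = x"
    by (simp_all add: hd_conv_nth last_conv_nth)
  then have "length p \<noteq> 2"
    using edges[of 0] assms(2) margin_swap[of Pr x y] by auto
  then show "cycle (length p) (\<lambda>u. p ! u)"
    using \<open>2 \<le> length p\<close> \<open>distinct p\<close> by unfold_locales (auto simp: inj_on_nth)
  show "set p \<subseteq> cands Pr"
    using assms(1) unfolding majority_path_def by auto
qed

lemma exists_coherent_profile_electing:
  assumes "VSCC F" "anonymity F" "neutrality F" "monotonicity_two F" "profile Ps" "padded Ps"
    and "x \<in> cands Ps" "y \<in> cands Ps" "(x, y) \<notin> sc Ps"
  shows "\<exists>P'. profile P' \<and> coh_rel Ps x y P' \<and> y \<in> F P'"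
proof (cases "margin Ps x y \<le> 0")
  case True
  let ?P = "restrict_prof Ps {x, y}"
  have "profile ?P"
    using profile_restrict_prof[OF assms(5)] assms(7,8) by simp
  moreover have "y \<in> F ?P"
  proof (cases "x = y")
    case True
    then show ?thesis
      using VSCCD[OF assms(1) \<open>profile ?P\<close>] by auto
  next
    case False
    then show ?thesis
      using two_candidate_majority_in_F[OF assms(1-4) \<open>profile ?P\<close>] \<open>margin Ps x y \<le> 0\<close>
      by (simp add: margin_restrict_prof)
  qed
  ultimately show ?thesis
    using coh_rel_restrict_prof[OF assms(7,8)] by blast
next
  case False
  then obtain p where p: "majority_path Ps p y x" "margin Ps x y \<le> path_strength Ps p"
    using assms(7-9) unfolding sc_def by auto
  then interpret cycle "length p" "\<lambda>u. p ! u"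
    using cycle_majority_path(1)[OF p(1)] False by simp
  have "cycle_cands = set p"
    unfolding cycle_cands_def by (auto simp: in_set_conv_nth)
  then show ?thesis
    using exists_coherent_cyclic_profile[OF assms(1-3,5,6)] cycle_majority_path[OF p(1)] False
      p(2) path_strength_le[of _ p Ps] by fastforce
qed

theorem theorem7p5:
  fixes F :: "('v,'c) prof \<Rightarrow> 'c set"
  assumes "infinite (UNIV :: 'v set)" and "infinite (UNIV :: 'c set)"
    and "VSCC F"
    and "anonymity F" and "neutrality F" and "neutral_indifference F"
    and "monotonicity_two F" and "neutral_reversal F" and "coherent_IIA F"
    and "profile Pr"
  shows "SC Pr \<subseteq> F Pr"
proof
  fix y assume "y \<in> SC Pr"
  show "y \<in> F Pr"
  proof (rule ccontr)
    assume "y \<notin> F Pr"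
    obtain Ps where Ps: "profile Ps" "cands Ps = cands Pr" "margin Ps = margin Pr" "F Ps = F Pr"
      "padded Ps"
      using exists_padded_profile[OF assms(6,8,1,10)] by blast
    then have "y \<in> SC Ps"
      using \<open>y \<in> SC Pr\<close> sc_cong[of Ps Pr] unfolding SC_def by simp
    then have "y \<in> cands Ps" "\<And>x. (x, y) \<notin> sc Ps"
      unfolding SC_def by auto
    then obtain x where "x \<in> cands Ps" and y_lost: "\<And>P'. profile P' \<Longrightarrow> coh_rel Ps x y P' \<Longrightarrow> y \<notin> F P'"
      using assms(9)[unfolded coherent_IIA_def, rule_format, of Ps y] \<open>y \<notin> F Pr\<close> Ps(1,4) by auto
    then show False
      using exists_coherent_profile_electing[OF assms(3,4,5,7) Ps(1,5) \<open>x \<in> cands Ps\<close> \<open>y \<in> cands Ps\<close>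
          \<open>(x, y) \<notin> sc Ps\<close>] by blast
  qed
qed

end
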